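(* Let $n\ge2$ and let $\Pi$ be an $(n-1,n)$-Dyck path. A cell $c\in\lambda(\Pi)$ satisfies \[ \frac{\operatorname{arm}(c)}{\operatorname{leg}(c)}\le\frac{n-1}{n}<\frac{\operatorname{arm}(c)+1}{\operatorname{leg}(c)+1} \] (with $\frac00=0$ and $\frac x0=\infty$ for $x\ne0$) if and only if its south and east borders are both steps of $\Pi$, i.e. if and only if $\operatorname{arm}(c)=\operatorname{leg}(c)=0$.
   Context: An $(n-1,n)$-Dyck path is a lattice path from $(0,0)$ to $(n-1,n)$ of unit north and east steps staying weakly above the line $y=\frac{n}{n-1}x$. $\lambda(\Pi)$ is the set of unit cells of the rectangle $[0,n-1]\times[0,n]$ lying above (northwest of) $\Pi$. For $c\in\lambda(\Pi)$, $\operatorname{arm}(c)$ is the number of cells of $\lambda(\Pi)$ strictly east of $c$ in its row and $\operatorname{leg}(c)$ the number of cells of $\lambda(\Pi)$ strictly south of $c$ in its column. *)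

theory Defs
  imports Main "HOL-Library.Extended_Real"
begin

datatype step = N | E

definition pt :: "step list \<Rightarrow> nat \<Rightarrow> nat \<times> nat" where
  "pt p k = (count_list (take k p) E, count_list (take k p) N)"

text \<open>(n-1,n)-Dyck path: from (0,0) to (n-1,n), weakly above y = n/(n-1) x,
  i.e. n*x \<le> (n-1)*y at every lattice point of the path.\<close>
definition dyck :: "nat \<Rightarrow> step list \<Rightarrow> bool" where
  "dyck n p \<longleftrightarrow> count_list p E = n - 1 \<and> count_list p N = n \<and>
     (\<forall>k \<le> length p. n * fst (pt p k) \<le> (n - 1) * snd (pt p k))"

definition segs :: "step list \<Rightarrow> ((nat \<times> nat) \<times> (nat \<times> nat)) set" where
  "segs p = {(pt p k, pt p (Suc k)) | k. k < length p}"

text \<open>Cells are indexed by their lower-left corner (i,j).  A cell of row j lies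
  above (northwest of) the path iff it is west of the North step of the path
  going from height j to height j+1.\<close>
definition lam :: "step list \<Rightarrow> (nat \<times> nat) set" where
  "lam p = {(i, j). \<exists>k < length p. p ! k = N \<and> snd (pt p k) = j \<and> i < fst (pt p k)}"

definition arm :: "step list \<Rightarrow> nat \<times> nat \<Rightarrow> nat" where
  "arm p c = card {i'. fst c < i' \<and> (i', snd c) \<in> lam p}"

definition leg :: "step list \<Rightarrow> nat \<times> nat \<Rightarrow> nat" where
  "leg p c = card {j'. j' < snd c \<and> (fst c, j') \<in> lam p}"

definition frac :: "nat \<Rightarrow> nat \<Rightarrow> ereal" where
  "frac a b = (if b = 0 then (if a = 0 then 0 else \<infinity>) else ereal (real a / real b))"

end

theory Submission
  imports Defs
begin

text \<open>The two ratio conditions say that \<open>(n-1)/n\<close> lies in the half-open window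
  \<open>[a/l, (a+1)/(l+1))\<close>.  For \<open>l > 0\<close> they force \<open>(n-1) l = a n\<close>, so \<open>n\<close> divides \<open>l\<close>;
  but every cell lies in a row \<open>j < n\<close>, whence \<open>leg < n\<close>.  So the window condition
  holds exactly when \<open>leg = 0\<close> and then \<open>arm = 0\<close>.  Geometrically, \<open>arm = leg = 0\<close>
  means the cell touches the North step ending its row and no cell lies below it
  in its column, which pins the East step under the cell to the path as well.\<close>

lemma ratio_window_imp_le:
  fixes a l n :: nat
  assumes "0 < l" and "a * n \<le> (n - 1) * l" and "(n - 1) * (l + 1) < (a + 1) * n"
  shows "n \<le> l"
proof -
  define m where "m = n - 1"
  have "n \<noteq> 0" using assms(1,3) by (cases n) auto
  then have n: "n = m + 1" by (simp add: m_def)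
  have "m * l = (m + 1) * a" using assms(2,3) unfolding n m_def[symmetric]
    by (simp add: algebra_simps)
  then have "(m + 1) dvd m * l" by (metis dvd_triv_left)
  then have "(m + 1) dvd l" by (simp add: coprime_dvd_mult_right_iff)
  with assms(1) show ?thesis unfolding n by (simp add: dvd_imp_le)
qed

lemma frac_le_iff:
  fixes a l n :: nat assumes "0 < l" and "0 < n"
  shows "frac a l \<le> ereal (real (n - 1) / real n) \<longleftrightarrow> a * n \<le> (n - 1) * l"
proof -
  have "frac a l \<le> ereal (real (n - 1) / real n) \<longleftrightarrow> real a * real n \<le> real (n - 1) * real l"
    using assms by (simp add: frac_def divide_simps)
  also have "\<dots> \<longleftrightarrow> a * n \<le> (n - 1) * l" by (simp only: of_nat_mult [symmetric] of_nat_le_iff)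
  finally show ?thesis .
qed

lemma less_frac_Suc_iff:
  fixes a l n :: nat assumes "0 < n"
  shows "ereal (real (n - 1) / real n) < frac (a + 1) (l + 1) \<longleftrightarrow> (n - 1) * (l + 1) < (a + 1) * n"
proof -
  have "ereal (real (n - 1) / real n) < frac (a + 1) (l + 1) \<longleftrightarrow>
        real (n - 1) * real (l + 1) < real (a + 1) * real n"
    using assms by (simp add: frac_def divide_simps del: of_nat_add)
  also have "\<dots> \<longleftrightarrow> (n - 1) * (l + 1) < (a + 1) * n" by (simp only: of_nat_mult [symmetric] of_nat_less_iff)
  finally show ?thesis .
qed

lemma frac_window_iff:
  assumes "l < n"
  shows "(frac a l \<le> ereal (real (n - 1) / real n) \<and>
          ereal (real (n - 1) / real n) < frac (a + 1) (l + 1)) \<longleftrightarrow> a = 0 \<and> l = 0"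
proof (cases "l = 0")
  case True
  have "real (n - 1) / real n < 1" using assms by simp
  then show ?thesis using True by (auto simp: frac_def)
next
  case False
  then have "\<not> (a * n \<le> (n - 1) * l \<and> (n - 1) * (l + 1) < (a + 1) * n)"
    using ratio_window_imp_le[of l a n] assms by auto
  with False assms show ?thesis
    by (simp only: frac_le_iff less_frac_Suc_iff) simp
qed

lemma step_neq_E [simp]: "s \<noteq> E \<longleftrightarrow> s = N"
  by (cases s) auto

lemma pt_0 [simp]: "pt p 0 = (0, 0)"
  by (simp add: pt_def)

lemma pt_Suc:
  "k < length p \<Longrightarrow> pt p (Suc k) =
     (if p ! k = E then (Suc (fst (pt p k)), snd (pt p k)) else (fst (pt p k), Suc (snd (pt p k))))"
  by (cases "p ! k") (auto simp: pt_def take_Suc_conv_app_nth)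

lemma pt_beyond_length: "length p \<le> k \<Longrightarrow> pt p k = pt p (length p)"
  by (simp add: pt_def)

lemma pt_mono:
  assumes "k \<le> k'"
  shows "fst (pt p k) \<le> fst (pt p k')" and "snd (pt p k) \<le> snd (pt p k')"
proof -
  have "take k' p = take k p @ take (k' - k) (drop k p)"
    using take_add[of k "k' - k" p] assms by simp
  then show "fst (pt p k) \<le> fst (pt p k')" and "snd (pt p k) \<le> snd (pt p k')"
    by (simp_all add: pt_def)
qed

lemma snd_pt_lt_count_N:
  assumes "k < length p" and "p ! k = N"
  shows "snd (pt p k) < count_list p N"
proof -
  have "snd (pt p (Suc k)) \<le> snd (pt p (length p))"
    using pt_mono(2)[of "Suc k" "length p" p] assms(1) by simp
  then show ?thesis using pt_Suc[OF assms(1)] assms(2) by (simp add: pt_def)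
qed

lemma east_step_crossing:
  assumes "i < fst (pt p k)"
  obtains k' where "k' < k" "k' < length p" "p ! k' = E" "fst (pt p k') = i"
  using assms
proof (induction k)
  case (Suc k)
  show ?case
  proof (cases "i < fst (pt p k)")
    case True
    then show ?thesis using Suc.IH Suc.prems(1) by (meson less_SucI)
  next
    case False
    have "k < length p"
      using False Suc.prems(2) pt_beyond_length[of p k] pt_beyond_length[of p "Suc k"]
      by (cases "k < length p") auto
    then have "p ! k = E" "fst (pt p k) = i"
      using False Suc.prems(2) pt_Suc[of k p] by (auto split: if_splits)
    then show ?thesis using Suc.prems(1) \<open>k < length p\<close> by blast
  qed
qed simp

lemma north_step_crossing:
  assumes "j < snd (pt p k)"
  obtains k' where "k' < k" "k' < length p" "p ! k' = N" "snd (pt p k') = j"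
  using assms
proof (induction k)
  case (Suc k)
  show ?case
  proof (cases "j < snd (pt p k)")
    case True
    then show ?thesis using Suc.IH Suc.prems(1) by (meson less_SucI)
  next
    case False
    have "k < length p"
      using False Suc.prems(2) pt_beyond_length[of p k] pt_beyond_length[of p "Suc k"]
      by (cases "k < length p") auto
    then have "p ! k = N" "snd (pt p k) = j"
      using False Suc.prems(2) pt_Suc[of k p] by (auto split: if_splits)
    then show ?thesis using Suc.prems(1) \<open>k < length p\<close> by blast
  qed
qed simp

lemma north_step_at_height_unique:
  assumes "k1 < length p" "p ! k1 = N" "k2 < length p" "p ! k2 = N"
    and "snd (pt p k1) = snd (pt p k2)"
  shows "k1 = k2"
proof -
  have higher: "snd (pt p k) < snd (pt p k')" if "k < k'" "k < length p" "p ! k = N" for k k'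
    using pt_mono(2)[of "Suc k" k' p] pt_Suc[OF that(2)] that by auto
  show ?thesis
  proof (cases k1 k2 rule: linorder_cases)
    case less
    with higher[OF less assms(1,2)] assms(5) show ?thesis by simp
  next
    case greater
    with higher[OF greater assms(3,4)] assms(5) show ?thesis by simp
  qed
qed

lemma east_seg_iff:
  "((a, b), (Suc a, b)) \<in> segs p \<longleftrightarrow> (\<exists>k < length p. pt p k = (a, b) \<and> p ! k = E)"
proof -
  have step: "pt p (Suc k) = (Suc a, b) \<longleftrightarrow> p ! k = E" if "k < length p" "pt p k = (a, b)" for k
    using pt_Suc[OF that(1)] that(2) by auto
  have "((a, b), (Suc a, b)) \<in> segs p \<longleftrightarrow>
        (\<exists>k < length p. pt p k = (a, b) \<and> pt p (Suc k) = (Suc a, b))"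
    unfolding segs_def by (auto; metis)
  also have "\<dots> \<longleftrightarrow> (\<exists>k < length p. pt p k = (a, b) \<and> p ! k = E)"
    using step by auto
  finally show ?thesis .
qed

lemma north_seg_iff:
  "((a, b), (a, Suc b)) \<in> segs p \<longleftrightarrow> (\<exists>k < length p. pt p k = (a, b) \<and> p ! k = N)"
proof -
  have step: "pt p (Suc k) = (a, Suc b) \<longleftrightarrow> p ! k = N" if "k < length p" "pt p k = (a, b)" for k
    using pt_Suc[OF that(1)] that(2) by auto
  have "((a, b), (a, Suc b)) \<in> segs p \<longleftrightarrow>
        (\<exists>k < length p. pt p k = (a, b) \<and> pt p (Suc k) = (a, Suc b))"
    unfolding segs_def by (auto; metis)
  also have "\<dots> \<longleftrightarrow> (\<exists>k < length p. pt p k = (a, b) \<and> p ! k = N)"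
    using step by auto
  finally show ?thesis .
qed

lemma arm_eq:
  assumes "k < length p" "p ! k = N" "snd (pt p k) = j"
  shows "arm p (i, j) = fst (pt p k) - Suc i"
proof -
  have "{i'. i < i' \<and> (i', j) \<in> lam p} = {i<..<fst (pt p k)}"
  proof (intro set_eqI iffI)
    fix i' assume "i' \<in> {i'. i < i' \<and> (i', j) \<in> lam p}"
    then obtain k' where k': "i < i'" "k' < length p" "p ! k' = N" "snd (pt p k') = j"
        "i' < fst (pt p k')"
      by (auto simp: lam_def)
    then have "k' = k" using north_step_at_height_unique[OF k'(2,3) assms(1,2)] assms(3) by simp
    with k' show "i' \<in> {i<..<fst (pt p k)}" by simp
  next
    fix i' assume "i' \<in> {i<..<fst (pt p k)}"
    then show "i' \<in> {i'. i < i' \<and> (i', j) \<in> lam p}" using assms by (auto simp: lam_def)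
  qed
  then show ?thesis by (simp add: arm_def)
qed

lemma leg_le: "leg p (i, j) \<le> j"
proof -
  have "{j'. j' < j \<and> (i, j') \<in> lam p} \<subseteq> {..<j}" by auto
  then have "leg p (i, j) \<le> card {..<j}" unfolding leg_def fst_conv snd_conv by (rule card_mono [OF finite_lessThan])
  then show ?thesis by simp
qed

lemma leg_eq_0_iff: "leg p (i, j) = 0 \<longleftrightarrow> (\<forall>j' < j. (i, j') \<notin> lam p)"
proof -
  have "finite {j'. j' < j \<and> (i, j') \<in> lam p}" by simp
  then show ?thesis by (auto simp: leg_def)
qed

lemma leg_lt_count_N:
  assumes "(i, j) \<in> lam p"
  shows "leg p (i, j) < count_list p N"
proof -
  obtain k where "k < length p" "p ! k = N" "snd (pt p k) = j"
    using assms by (auto simp: lam_def)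
  then have "j < count_list p N" using snd_pt_lt_count_N by blast
  then show ?thesis using leg_le[of p i j] by simp
qed

lemma corner_segs_imp_arm_leg_0:
  assumes "((i, j), (Suc i, j)) \<in> segs p" and "((Suc i, j), (Suc i, Suc j)) \<in> segs p"
  shows "arm p (i, j) = 0 \<and> leg p (i, j) = 0"
proof
  obtain ke where ke: "ke < length p" "pt p ke = (i, j)" "p ! ke = E"
    using assms(1) by (auto simp: east_seg_iff)
  obtain kn where kn: "kn < length p" "pt p kn = (Suc i, j)" "p ! kn = N"
    using assms(2) by (auto simp: north_seg_iff)
  show "arm p (i, j) = 0" using arm_eq[OF kn(1,3)] kn(2) by simp
  have "(i, j') \<notin> lam p" if "j' < j" for j'
  proof
    assume "(i, j') \<in> lam p"
    then obtain k where k: "k < length p" "p ! k = N" "snd (pt p k) = j'" "i < fst (pt p k)"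
      by (auto simp: lam_def)
    \<comment> \<open>Before the East step the path is left of column \<open>i+1\<close>, after it at height \<open>\<ge> j\<close>.\<close>
    show False
    proof (cases "ke \<le> k")
      case True
      then show False using pt_mono(2)[OF True, of p] ke(2) k(3) that by simp
    next
      case False
      then show False using pt_mono(1)[of k ke p] ke(2) k(4) by simp
    qed
  qed
  then show "leg p (i, j) = 0" by (simp add: leg_eq_0_iff)
qed

lemma arm_leg_0_imp_corner_segs:
  assumes "(i, j) \<in> lam p" and "arm p (i, j) = 0" and "leg p (i, j) = 0"
  shows "((i, j), (Suc i, j)) \<in> segs p \<and> ((Suc i, j), (Suc i, Suc j)) \<in> segs p"
proof
  obtain kn where kn: "kn < length p" "p ! kn = N" "snd (pt p kn) = j" "i < fst (pt p kn)"
    using assms(1) by (auto simp: lam_def)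
  have corner: "pt p kn = (Suc i, j)"
    using arm_eq[OF kn(1-3)] assms(2) kn(3,4) by (simp add: prod_eq_iff)
  then show "((Suc i, j), (Suc i, Suc j)) \<in> segs p"
    using kn(1,2) by (auto simp: north_seg_iff)
  obtain ke where ke: "ke < kn" "ke < length p" "p ! ke = E" "fst (pt p ke) = i"
    using east_step_crossing[of i p kn] kn(4) by blast
  have below: "snd (pt p ke) \<le> j" using pt_mono(2)[of ke kn p] ke(1) kn(3) by simp
  have "\<not> snd (pt p ke) < j"
  proof
    assume "snd (pt p ke) < j"
    \<comment> \<open>Then the North step leaving the height of the East step lies right of column \<open>i\<close>.\<close>
    then obtain k where k: "k < length p" "p ! k = N" "snd (pt p k) = snd (pt p ke)"
      using north_step_crossing[of "snd (pt p ke)" p kn] kn(3) by metis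
    have "\<not> k < ke" using pt_mono(2)[of "Suc k" ke p] pt_Suc[OF k(1)] k(2,3) by auto
    with ke(3) k(2) have "Suc ke \<le> k" by (cases "k = ke") auto
    then have "i < fst (pt p k)" using pt_mono(1)[of "Suc ke" k p] pt_Suc[OF ke(2)] ke(3,4) by simp
    then have "(i, snd (pt p ke)) \<in> lam p" using k by (auto simp: lam_def)
    with assms(3) \<open>snd (pt p ke) < j\<close> show False by (simp add: leg_eq_0_iff)
  qed
  with below ke(4) have "pt p ke = (i, j)" by (simp add: prod_eq_iff)
  then show "((i, j), (Suc i, j)) \<in> segs p" using ke(2,3) by (auto simp: east_seg_iff)
qed

theorem theorem6:
  fixes n :: nat and p :: "step list" and i j :: nat
  assumes "n \<ge> 2" and "dyck n p" and "(i, j) \<in> lam p"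
  shows "((frac (arm p (i, j)) (leg p (i, j)) \<le> ereal (real (n - 1) / real n) \<and>
          ereal (real (n - 1) / real n) < frac (arm p (i, j) + 1) (leg p (i, j) + 1))
         \<longleftrightarrow> (((i, j), (Suc i, j)) \<in> segs p \<and> ((Suc i, j), (Suc i, Suc j)) \<in> segs p)) \<and>
         ((((i, j), (Suc i, j)) \<in> segs p \<and> ((Suc i, j), (Suc i, Suc j)) \<in> segs p)
         \<longleftrightarrow> (arm p (i, j) = 0 \<and> leg p (i, j) = 0))"
proof -
  have "leg p (i, j) < n"
    using leg_lt_count_N[OF assms(3)] assms(2) by (simp add: dyck_def)
  moreover have "(((i, j), (Suc i, j)) \<in> segs p \<and> ((Suc i, j), (Suc i, Suc j)) \<in> segs p)
                 \<longleftrightarrow> (arm p (i, j) = 0 \<and> leg p (i, j) = 0)"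
    using corner_segs_imp_arm_leg_0 arm_leg_0_imp_corner_segs[OF assms(3)] by blast
  ultimately show ?thesis using frac_window_iff by blast
qed

end
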